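(* Let $a$ be a real number and $r\ge1$. On the space of polynomials in $y=(y_1,\dots,y_r)$, define the operators $$D_j=\partial_{y_j}+\frac a2\sum_{i\ne j}\frac{1}{y_j-y_i}(1-s_{ij}),\qquad U_j=D_jy_j-\frac a2\sum_{i<j}s_{ij},$$ where $s_{ij}$ acts by interchanging the variables $y_i$ and $y_j$ and $D_jy_j$ denotes the composition of multiplication by $y_j$ followed by $D_j$. Then $$(D_1D_2\cdots D_r)(y_1y_2\cdots y_r)=U_1U_2\cdots U_r,$$ where $y_1\cdots y_r$ denotes the multiplication operator. *)

theory Defs
  imports Complex_Main "HOL-Library.Poly_Mapping"
begin

text \<open>Real polynomials in the variables y_1, y_2, ... : a monomial is an exponent
  vector (nat =>0 nat), a polynomial a finitely supported coefficient map.\<close>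
type_synonym mpoly = "(nat \<Rightarrow>\<^sub>0 nat) \<Rightarrow>\<^sub>0 real"

definition const :: "real \<Rightarrow> mpoly" where
  "const c = Poly_Mapping.single 0 c"

definition Y :: "nat \<Rightarrow> mpoly" where
  "Y i = Poly_Mapping.single (Poly_Mapping.single i 1) 1"

definition pderiv_var :: "nat \<Rightarrow> mpoly \<Rightarrow> mpoly" where
  "pderiv_var j f = (\<Sum>\<alpha>\<in>Poly_Mapping.keys f.
      Poly_Mapping.single (\<alpha> - Poly_Mapping.single j 1)
        (Poly_Mapping.lookup f \<alpha> * real (Poly_Mapping.lookup (\<alpha>::nat \<Rightarrow>\<^sub>0 nat) j)))"

definition swap_exp :: "nat \<Rightarrow> nat \<Rightarrow> (nat \<Rightarrow>\<^sub>0 nat) \<Rightarrow> (nat \<Rightarrow>\<^sub>0 nat)" where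
  "swap_exp i j \<alpha> = Abs_poly_mapping (\<lambda>k. Poly_Mapping.lookup \<alpha> (if k = i then j else if k = j then i else k))"

definition swap_var :: "nat \<Rightarrow> nat \<Rightarrow> mpoly \<Rightarrow> mpoly" where
  "swap_var i j f = (\<Sum>\<alpha>\<in>Poly_Mapping.keys f. Poly_Mapping.single (swap_exp i j \<alpha>) (Poly_Mapping.lookup f \<alpha>))"

definition divdiff :: "nat \<Rightarrow> nat \<Rightarrow> mpoly \<Rightarrow> mpoly" where
  "divdiff i j f = (THE g. (Y j - Y i) * g = f - swap_var i j f)"

definition Dop :: "real \<Rightarrow> nat \<Rightarrow> nat \<Rightarrow> mpoly \<Rightarrow> mpoly" where
  "Dop a r j f = pderiv_var j f + const (a / 2) * (\<Sum>i\<in>{1..r} - {j}. divdiff i j f)"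

definition Uop :: "real \<Rightarrow> nat \<Rightarrow> nat \<Rightarrow> mpoly \<Rightarrow> mpoly" where
  "Uop a r j f = Dop a r j (Y j * f) - const (a / 2) * (\<Sum>i\<in>{1..<j}. swap_var i j f)"

definition comp_ops :: "nat \<Rightarrow> (nat \<Rightarrow> mpoly \<Rightarrow> mpoly) \<Rightarrow> mpoly \<Rightarrow> mpoly" where
  "comp_ops r F = foldr (\<circ>) (map F [1..<r+1]) id"

end

theory Submission
  imports Defs "HOL-Combinatorics.Transposition"
begin

(* For k \<noteq> j the derivative part of D_j commutes with multiplication by y_k, while the
   divided difference (1 - s_ij)/(y_j - y_i) obeys the twisted Leibniz rule
   (y_k h - s_ij(y_k h))/(y_j - y_i) = y_k (h - s_ij h)/(y_j - y_i) - [k = i] s_ij h.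
   Hence D_j y_k = y_k D_j - (a/2) s_kj, and moving y_1 ... y_(j-1) through D_j y_j gives
   D_j (y_1 ... y_j) = (y_1 ... y_(j-1)) U_j, since each s_kj turns the factor y_j back
   into y_k. Peeling off D_r, D_(r-1), ..., D_1 in turn proves the identity; it holds on all
   polynomials. *)

lemma comp_ops_Suc: "comp_ops (Suc m) F = comp_ops m F \<circ> F (Suc m)"
proof -
  have foldr_comp: "foldr (\<circ>) fs g = foldr (\<circ>) fs id \<circ> g" for fs :: "('a \<Rightarrow> 'a) list" and g
    by (induction fs) (simp_all add: o_assoc)
  show ?thesis
    unfolding comp_ops_def by (simp add: foldr_comp[of _ "F (Suc m)"])
qed

lemma poly_mapping_single_add_induct:
  assumes "P 0"
    and "\<And>x c f. x \<notin> Poly_Mapping.keys f \<Longrightarrow> P f \<Longrightarrow> P (Poly_Mapping.single x c + f)"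
  shows "P (f :: 'a \<Rightarrow>\<^sub>0 'b::monoid_add)"
proof (induction f rule: update_induct)
  case const
  show ?case by (fact assms(1))
next
  case (update f x c)
  have "Poly_Mapping.update x c f = Poly_Mapping.single x c + f"
    using update.hyps(1)
    by (intro poly_mapping_eqI) (auto simp: lookup_update lookup_add lookup_single in_keys_iff when_def)
  then show ?case using assms(2) update by simp
qed

lemma poly_mapping_additive_eq:
  fixes L M :: "('a \<Rightarrow>\<^sub>0 'b::monoid_add) \<Rightarrow> 'c::cancel_comm_monoid_add"
  assumes L_add: "\<And>f g. L (f + g) = L f + L g" and M_add: "\<And>f g. M (f + g) = M f + M g"
    and "\<And>x c. L (Poly_Mapping.single x c) = M (Poly_Mapping.single x c)"
  shows "L f = M f"
proof (induction f rule: poly_mapping_single_add_induct)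
  case 1
  have "L 0 = 0" "M 0 = 0"
    using L_add[of 0 0] M_add[of 0 0] by simp_all
  then show ?case by simp
qed (simp add: assms)

lemma Y_pow: "Y k ^ n = Poly_Mapping.single (Poly_Mapping.single k n) 1"
  by (induction n) (simp_all add: Y_def mult_single single_add[symmetric] add.commute)

lemma Y_mult_single:
  "Y k * Poly_Mapping.single \<alpha> c = Poly_Mapping.single (Poly_Mapping.single k 1 + \<alpha>) c"
  by (simp add: Y_def mult_single)

lemma Y_inject: "Y i = Y j \<longleftrightarrow> i = j"
proof
  assume "Y i = Y j"
  then have "Poly_Mapping.lookup (Y j) (Poly_Mapping.single i 1) = 1"
    by (metis Y_def lookup_single_eq)
  then have "Poly_Mapping.single j 1 = Poly_Mapping.single i (1::nat)"
    by (simp add: Y_def lookup_single when_def split: if_splits)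
  then have "Poly_Mapping.lookup (Poly_Mapping.single j 1) i = (1::nat)"
    by simp
  then show "i = j"
    by (simp add: lookup_single when_def split: if_splits)
qed simp

lemma swap_exp_eq_map_key: "swap_exp i j = Poly_Mapping.map_key (transpose i j)"
proof
  fix \<alpha> :: "nat \<Rightarrow>\<^sub>0 nat"
  have lookup_map_key:
    "(\<lambda>k. Poly_Mapping.lookup \<alpha> (transpose i j k))
      = Poly_Mapping.lookup (Poly_Mapping.map_key (transpose i j) \<alpha>)"
    by (simp add: map_key.rep_eq[OF inj_transpose] o_def)
  have "swap_exp i j \<alpha> = Abs_poly_mapping (\<lambda>k. Poly_Mapping.lookup \<alpha> (transpose i j k))"
    by (simp only: swap_exp_def transpose_def)
  also have "\<dots> = Poly_Mapping.map_key (transpose i j) \<alpha>"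
    unfolding lookup_map_key by (rule lookup_inverse)
  finally show "swap_exp i j \<alpha> = Poly_Mapping.map_key (transpose i j) \<alpha>" .
qed

lemma swap_exp_add: "swap_exp i j (\<alpha> + \<beta>) = swap_exp i j \<alpha> + swap_exp i j \<beta>"
  by (simp add: swap_exp_eq_map_key map_key_plus inj_transpose)

lemma swap_exp_single: "swap_exp i j (Poly_Mapping.single k n) = Poly_Mapping.single (transpose i j k) n"
  by (metis swap_exp_eq_map_key map_key_single inj_transpose transpose_involutory)

lemma swap_var_add: "swap_var i j (f + g) = swap_var i j f + swap_var i j g"
  unfolding swap_var_def by (rule setsum_keys_plus_distrib) (simp_all add: single_add)

lemma swap_var_single:
  "swap_var i j (Poly_Mapping.single \<alpha> c) = Poly_Mapping.single (swap_exp i j \<alpha>) c"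
  unfolding swap_var_def by (cases "c = 0") simp_all

lemma swap_var_mult: "swap_var i j (f * g) = swap_var i j f * swap_var i j g"
proof (rule poly_mapping_additive_eq[where L = "\<lambda>f. swap_var i j (f * g)"])
  fix \<alpha> :: "nat \<Rightarrow>\<^sub>0 nat" and c :: real
  show "swap_var i j (Poly_Mapping.single \<alpha> c * g)
      = swap_var i j (Poly_Mapping.single \<alpha> c) * swap_var i j g"
    by (rule poly_mapping_additive_eq[where f = g])
      (simp_all add: distrib_left swap_var_add swap_var_single mult_single swap_exp_add)
qed (simp_all add: distrib_right swap_var_add)

lemma swap_var_Y: "swap_var i j (Y k) = Y (transpose i j k)"
  by (simp add: Y_def swap_var_single swap_exp_single)

lemma swap_var_const: "swap_var i j (const c) = const c"
  by (metis const_def swap_var_single swap_exp_single single_zero)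

lemma pderiv_var_add: "pderiv_var j (f + g) = pderiv_var j f + pderiv_var j g"
  unfolding pderiv_var_def by (rule setsum_keys_plus_distrib) (simp_all add: distrib_right single_add)

lemma pderiv_var_single:
  "pderiv_var j (Poly_Mapping.single \<alpha> c) =
     Poly_Mapping.single (\<alpha> - Poly_Mapping.single j 1) (c * real (Poly_Mapping.lookup \<alpha> j))"
  unfolding pderiv_var_def by (cases "c = 0") simp_all

lemma pderiv_var_Y_mult:
  assumes "k \<noteq> j"
  shows "pderiv_var j (Y k * h) = Y k * pderiv_var j h"
proof (rule poly_mapping_additive_eq[where f = h])
  fix \<alpha> :: "nat \<Rightarrow>\<^sub>0 nat" and c :: real
  have "Poly_Mapping.single k 1 + \<alpha> - Poly_Mapping.single j 1
      = Poly_Mapping.single k 1 + (\<alpha> - Poly_Mapping.single j 1)"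
    using assms by (intro poly_mapping_eqI) (auto simp: lookup_add lookup_minus lookup_single when_def)
  then show "pderiv_var j (Y k * Poly_Mapping.single \<alpha> c)
      = Y k * pderiv_var j (Poly_Mapping.single \<alpha> c)"
    using assms by (simp add: Y_mult_single pderiv_var_single lookup_add lookup_single)
qed (simp_all add: distrib_left pderiv_var_add)

lemma Y_diff_dvd_swap_diff: "(Y j - Y i) dvd (h - swap_var i j h)"
proof -
  define P where "P h \<longleftrightarrow> (Y j - Y i) dvd (h - swap_var i j h)" for h
  have P_add: "P (f + g)" if "P f" "P g" for f g
  proof -
    have "f + g - swap_var i j (f + g) = (f - swap_var i j f) + (g - swap_var i j g)"
      by (simp add: swap_var_add)
    then show ?thesis using that unfolding P_def by (metis dvd_add)
  qed
  have P_mult: "P (f * g)" if "P f" "P g" for f g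
  proof -
    have "f * g - swap_var i j (f * g) = f * (g - swap_var i j g) + (f - swap_var i j f) * swap_var i j g"
      by (simp add: swap_var_mult algebra_simps)
    then show ?thesis using that unfolding P_def by (simp add: dvd_add)
  qed
  have P_const: "P (const c)" for c
    unfolding P_def swap_var_const by simp
  have P_Y: "P (Y k)" for k
  proof -
    have "Y k - Y (transpose i j k) = (if k = i then -1 else if k = j then 1 else 0) * (Y j - Y i)"
      by (simp add: transpose_def)
    then show ?thesis unfolding P_def swap_var_Y by simp
  qed
  have P_single: "P (Poly_Mapping.single \<alpha> c)" for \<alpha> c
  proof (induction \<alpha> rule: poly_mapping_single_add_induct)
    case 1
    show ?case using P_const by (simp add: const_def)
  next
    case (2 k n \<beta>)
    have "P (Y k ^ n)"
      using P_const[of 1] by (induction n) (simp_all add: P_mult P_Y const_def)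
    moreover have
      "Poly_Mapping.single (Poly_Mapping.single k n + \<beta>) c = Y k ^ n * Poly_Mapping.single \<beta> c"
      by (simp add: Y_pow mult_single)
    ultimately show ?case using 2 by (simp add: P_mult)
  qed
  have "P h"
  proof (induction h rule: poly_mapping_single_add_induct)
    case 1
    show ?case by (simp add: P_def swap_var_def)
  qed (simp add: P_add P_single)
  then show ?thesis unfolding P_def .
qed

lemma divdiff_eqI:
  assumes "i \<noteq> j" and "(Y j - Y i) * g = h - swap_var i j h"
  shows "divdiff i j h = g"
  unfolding divdiff_def
proof (rule the_equality)
  fix g'
  assume "(Y j - Y i) * g' = h - swap_var i j h"
  moreover have "Y j - Y i \<noteq> 0"
    using assms(1) by (simp add: Y_inject)
  ultimately show "g' = g"
    using assms(2) mult_left_cancel by metis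
qed (fact assms(2))

lemma Y_diff_mult_divdiff:
  assumes "i \<noteq> j"
  shows "(Y j - Y i) * divdiff i j h = h - swap_var i j h"
proof -
  obtain g where g: "h - swap_var i j h = (Y j - Y i) * g"
    using Y_diff_dvd_swap_diff by (rule dvdE)
  then have "divdiff i j h = g"
    by (intro divdiff_eqI[OF assms]) simp
  with g show ?thesis
    by simp
qed

lemma divdiff_Y_mult:
  assumes "i \<noteq> j" and "k \<noteq> j"
  shows "divdiff i j (Y k * h) = Y k * divdiff i j h - (if k = i then swap_var i j h else 0)"
proof (rule divdiff_eqI[OF assms(1)])
  have "(Y j - Y i) * (Y k * divdiff i j h - (if k = i then swap_var i j h else 0))
      = Y k * ((Y j - Y i) * divdiff i j h) - (if k = i then (Y j - Y i) * swap_var i j h else 0)"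
    by (simp add: algebra_simps)
  also have "\<dots> = Y k * (h - swap_var i j h) - (if k = i then (Y j - Y i) * swap_var i j h else 0)"
    by (simp only: Y_diff_mult_divdiff[OF assms(1)])
  also have "\<dots> = Y k * h - swap_var i j (Y k * h)"
    using assms(2) by (simp add: swap_var_mult swap_var_Y transpose_def algebra_simps)
  finally show "(Y j - Y i) * (Y k * divdiff i j h - (if k = i then swap_var i j h else 0))
      = Y k * h - swap_var i j (Y k * h)" .
qed

lemma Dop_Y_mult:
  assumes "k \<noteq> j" and "k \<in> {1..r}"
  shows "Dop a r j (Y k * h) = Y k * Dop a r j h - const (a / 2) * swap_var k j h"
proof -
  let ?S = "{1..r} - {j}"
  have "(\<Sum>i\<in>?S. divdiff i j (Y k * h))
      = (\<Sum>i\<in>?S. Y k * divdiff i j h - (if k = i then swap_var i j h else 0))"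
    using assms(1) by (intro sum.cong) (auto simp: divdiff_Y_mult)
  also have "\<dots> = Y k * (\<Sum>i\<in>?S. divdiff i j h) - swap_var k j h"
    using assms by (simp add: sum_subtractf sum_distrib_left)
  finally have divdiff_sum:
    "(\<Sum>i\<in>?S. divdiff i j (Y k * h)) = Y k * (\<Sum>i\<in>?S. divdiff i j h) - swap_var k j h" .
  show ?thesis
    unfolding Dop_def pderiv_var_Y_mult[OF assms(1)] divdiff_sum by (simp add: algebra_simps)
qed

lemma swap_var_prod_Y:
  assumes "finite K" and "i \<notin> K" and "j \<notin> K"
  shows "swap_var i j (\<Prod>k\<in>K. Y k) = (\<Prod>k\<in>K. Y k)"
  using assms
proof (induction K rule: finite_induct)
  case empty
  show ?case using swap_var_const[of i j 1] by (simp add: const_def)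
next
  case (insert k K)
  then show ?case by (simp add: swap_var_mult swap_var_Y)
qed

lemma Dop_Y_prod_mult:
  assumes "finite K" and "K \<subseteq> {1..r}" and "j \<notin> K"
  shows "Dop a r j (Y j * (\<Prod>k\<in>K. Y k) * f) =
    (\<Prod>k\<in>K. Y k) * (Dop a r j (Y j * f) - const (a / 2) * (\<Sum>i\<in>K. swap_var i j f))"
  using assms
proof (induction K rule: finite_induct)
  case empty
  show ?case by simp
next
  case (insert k K)
  let ?P = "\<Prod>k\<in>K. Y k"
  have k: "k \<noteq> j" "k \<in> {1..r}"
    using insert.prems by auto
  have "Dop a r j (Y j * (\<Prod>k\<in>insert k K. Y k) * f) = Dop a r j (Y k * (Y j * ?P * f))"
    using insert.hyps by (simp add: algebra_simps)
  also have "\<dots> = Y k * Dop a r j (Y j * ?P * f) - const (a / 2) * swap_var k j (Y j * ?P * f)"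
    by (rule Dop_Y_mult[OF k])
  also have "swap_var k j (Y j * ?P * f) = Y k * ?P * swap_var k j f"
    using insert k(1) by (simp add: swap_var_mult swap_var_Y swap_var_prod_Y)
  also have "Dop a r j (Y j * ?P * f)
      = ?P * (Dop a r j (Y j * f) - const (a / 2) * (\<Sum>i\<in>K. swap_var i j f))"
    using insert by simp
  finally show ?case
    using insert.hyps by (simp add: algebra_simps)
qed

lemma Dop_prod_Y_mult:
  assumes "m \<in> {1..r}"
  shows "Dop a r m ((\<Prod>i\<in>{1..m}. Y i) * f) = (\<Prod>i\<in>{1..<m}. Y i) * Uop a r m f"
proof -
  have "{1..m} = insert m {1..<m}"
    using assms by auto
  then have "Dop a r m ((\<Prod>i\<in>{1..m}. Y i) * f) = Dop a r m (Y m * (\<Prod>i\<in>{1..<m}. Y i) * f)"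
    by (simp add: mult.assoc)
  also have "\<dots> = (\<Prod>i\<in>{1..<m}. Y i) *
      (Dop a r m (Y m * f) - const (a / 2) * (\<Sum>i\<in>{1..<m}. swap_var i m f))"
    using assms by (intro Dop_Y_prod_mult) auto
  finally show ?thesis
    unfolding Uop_def .
qed

lemma comp_ops_Dop_prod_Y_mult:
  "m \<le> r \<Longrightarrow> comp_ops m (Dop a r) ((\<Prod>i\<in>{1..m}. Y i) * f) = comp_ops m (Uop a r) f"
proof (induction m arbitrary: f)
  case 0
  show ?case by (simp add: comp_ops_def)
next
  case (Suc m)
  then have "Suc m \<in> {1..r}" by simp
  from Dop_prod_Y_mult[OF this]
  have "Dop a r (Suc m) ((\<Prod>i\<in>{1..Suc m}. Y i) * f) = (\<Prod>i\<in>{1..m}. Y i) * Uop a r (Suc m) f"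
    unfolding atLeastLessThanSuc_atLeastAtMost .
  then have "comp_ops (Suc m) (Dop a r) ((\<Prod>i\<in>{1..Suc m}. Y i) * f)
      = comp_ops m (Dop a r) ((\<Prod>i\<in>{1..m}. Y i) * Uop a r (Suc m) f)"
    by (simp only: comp_ops_Suc o_apply)
  also have "\<dots> = comp_ops (Suc m) (Uop a r) f"
    using Suc by (simp add: comp_ops_Suc)
  finally show ?case .
qed

theorem lemma6p1:
  fixes a :: real and r :: nat and f :: mpoly
  assumes "r \<ge> 1"
    and "\<forall>\<alpha>\<in>Poly_Mapping.keys f. Poly_Mapping.keys \<alpha> \<subseteq> {1..r}"
  shows "comp_ops r (Dop a r) ((\<Prod>i\<in>{1..r}. Y i) * f) = comp_ops r (Uop a r) f"
  using comp_ops_Dop_prod_Y_mult by simp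

end
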